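(* Let $\mathcal{A}$ be a central S-ring over a finite group $G$ with $n=|G|$. Then the sets $\mathrm{tr}(X)$, $X\in\mathcal{S}(\mathcal{A})$, form a partition of $G$, and $\mathrm{tr}(\mathcal{A})=\mathrm{Span}_{\mathbb{Z}}\{\underline{\mathrm{tr}(X)}: X\in\mathcal{S}(\mathcal{A})\}$ is a central S-ring over $G$ contained in $\mathcal{A}$; it consists exactly of the elements of $\mathcal{A}$ fixed by all the linear maps $\underline{X}\mapsto\underline{X^{(m)}}$ ($X\in\mathcal{S}(\mathcal{A})$), $m$ coprime to $n$.
   Context: For a finite group $G$ with identity $e$ and $X\subseteq G$, write $\underline{X}=\sum_{x\in X}x\in\mathbb{Z}G$. A subring $\mathcal{A}$ of $\mathbb{Z}G$ is an S-ring over $G$ if there is a partition $\mathcal{S}(\mathcal{A})$ of $G$ (basic sets) such that $\{e\}\in\mathcal{S}(\mathcal{A})$, $X\in\mathcal{S}(\mathcal{A})\Rightarrow X^{-1}\in\mathcal{S}(\mathcal{A})$, and $\mathcal{A}$ is the $\mathbb{Z}$-span of $\{\underline{X}: X\in\mathcal{S}(\mathcal{A})\}$. $\mathcal{A}$ is central if $\mathcal{A}\subseteq\mathcal{Z}(\mathbb{Z}G)$. For an integer $m$, $X^{(m)}=\{x^m:x\in X\}$. The trace of $X\subseteq G$ is $\mathrm{tr}(X)=\bigcup_{m:\ \gcd(m,|G|)=1}X^{(m)}$. *)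

theory Defs
  imports "HOL-Algebra.Group"
begin

text \<open>Elements of the group ring ZG: integer-valued functions on carrier G (zero outside).\<close>
definition ZG :: "('a, 'b) monoid_scheme \<Rightarrow> ('a \<Rightarrow> int) set" where
  "ZG G = {f. \<forall>x. x \<notin> carrier G \<longrightarrow> f x = 0}"

text \<open>The element underline X = sum of elements of X.\<close>
definition und :: "'a set \<Rightarrow> ('a \<Rightarrow> int)" where
  "und X = (\<lambda>x. if x \<in> X then 1 else 0)"

definition gmult :: "('a, 'b) monoid_scheme \<Rightarrow> ('a \<Rightarrow> int) \<Rightarrow> ('a \<Rightarrow> int) \<Rightarrow> ('a \<Rightarrow> int)" where
  "gmult G f h = (\<lambda>z. if z \<in> carrier G
      then (\<Sum>x\<in>carrier G. f x * h (inv\<^bsub>G\<^esub> x \<otimes>\<^bsub>G\<^esub> z)) else 0)"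

definition zspan :: "'a set set \<Rightarrow> ('a \<Rightarrow> int) set" where
  "zspan P = {f. \<exists>c :: 'a set \<Rightarrow> int. f = (\<lambda>g. \<Sum>X\<in>P. c X * und X g)}"

definition is_partition :: "('a, 'b) monoid_scheme \<Rightarrow> 'a set set \<Rightarrow> bool" where
  "is_partition G P \<longleftrightarrow> (\<forall>X\<in>P. X \<noteq> {} \<and> X \<subseteq> carrier G) \<and> \<Union>P = carrier G
      \<and> (\<forall>X\<in>P. \<forall>Y\<in>P. X \<noteq> Y \<longrightarrow> X \<inter> Y = {})"

definition inv_set :: "('a, 'b) monoid_scheme \<Rightarrow> 'a set \<Rightarrow> 'a set" where
  "inv_set G X = (\<lambda>x. inv\<^bsub>G\<^esub> x) ` X"

definition pow_set :: "('a, 'b) monoid_scheme \<Rightarrow> 'a set \<Rightarrow> int \<Rightarrow> 'a set" where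
  "pow_set G X m = (\<lambda>x. x [^]\<^bsub>G\<^esub> m) ` X"

definition tr :: "('a, 'b) monoid_scheme \<Rightarrow> 'a set \<Rightarrow> 'a set" where
  "tr G X = (\<Union>m\<in>{m :: int. coprime m (int (card (carrier G)))}. pow_set G X m)"

definition S_ring :: "('a, 'b) monoid_scheme \<Rightarrow> ('a \<Rightarrow> int) set \<Rightarrow> 'a set set \<Rightarrow> bool" where
  "S_ring G A S \<longleftrightarrow>
     A \<subseteq> ZG G \<and> und {\<one>\<^bsub>G\<^esub>} \<in> A
     \<and> (\<forall>a\<in>A. \<forall>b\<in>A. (\<lambda>x. a x + b x) \<in> A \<and> (\<lambda>x. - a x) \<in> A \<and> gmult G a b \<in> A)
     \<and> is_partition G S \<and> {\<one>\<^bsub>G\<^esub>} \<in> S \<and> (\<forall>X\<in>S. inv_set G X \<in> S)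
     \<and> A = zspan S"

definition central :: "('a, 'b) monoid_scheme \<Rightarrow> ('a \<Rightarrow> int) set \<Rightarrow> bool" where
  "central G A \<longleftrightarrow> (\<forall>a\<in>A. \<forall>f\<in>ZG G. gmult G a f = gmult G f a)"

text \<open>The linear map on A determined by underline X |-> underline X^(m), X in S.
  (Elements of A are constant on each basic set, so the coefficient of underline X in a
  is the value of a at any point of X.)\<close>
definition phi :: "('a, 'b) monoid_scheme \<Rightarrow> 'a set set \<Rightarrow> int \<Rightarrow> ('a \<Rightarrow> int) \<Rightarrow> ('a \<Rightarrow> int)" where
  "phi G S m a = (\<lambda>g. \<Sum>X\<in>S. a (SOME x. x \<in> X) * und (pow_set G X m) g)"

end

(*
  Let q be a prime not dividing |G|, a a class function in ZG and a^q its q-th power in ZG.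
  The q-tuples whose product lies in the conjugacy class C of y^q are permuted by cyclic rotation;
  the orbits of non-constant tuples have size q, and the constant tuples are the (x, ..., x) with x
  conjugate to y. Counting with weights gives |C| a^q(y^q) = |C| a(y)^q = |C| a(y) (mod q), and |C|
  is prime to q, so a^q(y^q) = a(y) (mod q).

  Applied to a = und X for a basic set X (a^q lies in A, so is constant on basic sets), this shows
  that X^(q) is a union of basic sets; since x |-> x^q is a bijection and S is finite, X^(q) is
  itself a basic set, and by factoring exponents so is X^(m) for every m prime to |G| (Schur).
  Hence the traces form a partition coarser than S, and the span of their sums consists of the
  elements of A invariant under all power maps, i.e. the fixed points of the maps phi m.

  For multiplicative closure the same congruence gives ab(y^p) = ab(y) (mod p) for power-invariant
  central a, b and every prime p > |G|, hence equality once also p > 2 * sum |ab|; every residue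
  class prime to |G| contains an exponent all of whose prime factors are that large.
*)

theory Submission
  imports Defs "HOL-Algebra.Group_Action" "HOL-Algebra.Multiplicative_Group" "HOL-Number_Theory.Residues"
begin

section \<open>Elementary number theory\<close>

lemma int_prime_pow_cong_self:
  fixes a :: int
  assumes q: "prime q"
  shows "[a ^ q = a] (mod int q)"
proof -
  define b where "b = nat (a mod int q)"
  have ab: "[a = int b] (mod int q)"
    using prime_gt_0_nat[OF q] by (simp add: b_def cong_def)
  have "[b ^ q = b] (mod q)"
  proof (cases "q dvd b")
    case True
    moreover have "q dvd b ^ q" using True prime_gt_0_nat[OF q] by (meson dvd_power dvd_trans)
    ultimately show ?thesis by (simp add: cong_def dvd_eq_mod_eq_0)
  next
    case False
    have "[b ^ (q - 1) * b = 1 * b] (mod q)"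
      using fermat_theorem[OF q False] by (rule cong_scalar_right)
    then show ?thesis using prime_gt_0_nat[OF q] by (simp flip: power_Suc2)
  qed
  then have "[int b ^ q = int b] (mod int q)"
    by (metis cong_int_iff of_nat_power)
  then show ?thesis
    using ab cong_pow[OF ab, of q] by (meson cong_sym cong_trans)
qed

lemma exists_cong_with_large_prime_factors:
  fixes m :: int and n M :: nat
  assumes n: "n > 0" and m: "coprime m (int n)"
  obtains k :: nat where "k > 0" "[int k = m] (mod int n)" "\<forall>p. prime p \<and> p dvd k \<longrightarrow> M < p"
proof -
  define L where "L = (\<Prod>p\<in>{p. prime p \<and> p \<le> M \<and> \<not> p dvd n}. p)"
  have L: "L > 0" "coprime n L"
    unfolding L_def by (auto simp: prime_gt_0_nat prime_imp_coprime coprime_commute intro!: prod_pos prod_coprime_right)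
  obtain x where x: "[x = nat (m mod int n)] (mod n)" "[x = 1] (mod L)"
    using binary_chinese_remainder_nat[OF L(2)] by blast
  define k where "k = x + n * L"
  have "[int k = m] (mod int n)"
  proof -
    have "[k = nat (m mod int n)] (mod n)"
      using x(1) unfolding k_def by (simp add: cong_def)
    then have "[int k = m mod int n] (mod int n)"
      using n by (simp flip: cong_int_iff)
    then show ?thesis by (simp add: cong_def)
  qed
  moreover have "M < p" if p: "prime p" "p dvd k" for p
  proof (rule ccontr)
    assume "\<not> M < p"
    have "coprime k n"
      using cong_imp_coprime[OF cong_sym[OF \<open>[int k = m] (mod int n)\<close>] m] by simp
    then have "\<not> p dvd n"
      using p coprime_common_divisor not_prime_unit by blast
    then have "p dvd L"
      unfolding L_def using p \<open>\<not> M < p\<close> by (intro dvd_prodI) auto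
    moreover have "[k = 1] (mod L)"
      using x(2) unfolding k_def by (simp add: cong_def)
    ultimately have "[k = 1] (mod p)"
      using cong_dvd_modulus_nat by blast
    then have "p dvd 1"
      using p(2) cong_dvd_iff by blast
    then show False using p(1) by simp
  qed
  moreover have "k > 0" unfolding k_def using n L by simp
  ultimately show ?thesis using that[of k] by blast
qed

lemma coprime_exponent_reduction:
  fixes P :: "nat \<Rightarrow> bool"
  assumes "n > 0" "coprime m (int n)" "P 1" "\<And>p k. prime p \<Longrightarrow> M < p \<Longrightarrow> P k \<Longrightarrow> P (p * k)"
  obtains k where "[int k = m] (mod int n)" "P k"
proof -
  obtain k where k: "k > 0" "[int k = m] (mod int n)" "\<forall>p. prime p \<and> p dvd k \<longrightarrow> M < p"
    using exists_cong_with_large_prime_factors[OF assms(1,2)] by blast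
  have "k \<noteq> 0 \<longrightarrow> (\<forall>p. prime p \<and> p dvd k \<longrightarrow> M < p) \<longrightarrow> P k"
  proof (induction k rule: prime_divisors_induct)
    case (factor p k)
    then show ?case using assms(4) by (auto intro: dvd_mult_right)
  qed (use assms(3) in auto)
  then show ?thesis using k that[of k] by blast
qed

lemma cong_eq_if_abs_le:
  fixes u v B :: int
  assumes "[u = v] (mod q)" "\<bar>u\<bar> \<le> B" "\<bar>v\<bar> \<le> B" "2 * B < q"
  shows "u = v"
proof (rule ccontr)
  assume "u \<noteq> v"
  moreover have "q dvd u - v" using assms(1) by (simp add: cong_iff_dvd_diff)
  ultimately have "\<bar>q\<bar> \<le> \<bar>u - v\<bar>" by (intro dvd_imp_le_int) auto
  then show False using assms by linarith
qed

section \<open>Cyclic rotation of lists\<close>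

lemma inj_rotate: "inj (rotate n)"
  unfolding rotate_def by (simp add: inj_rotate1)

lemma rotate1_rotate_fixed_iff: "rotate1 (rotate n xs) = rotate n xs \<longleftrightarrow> rotate1 xs = xs"
  using inj_rotate[of n] by (metis inj_eq rotate1_rotate_swap)

lemma rotate_mult_fixed: "rotate d xs = xs \<Longrightarrow> rotate (d * k) xs = xs"
  by (induction k) (simp_all flip: rotate_rotate)

lemma rotate1_fixed_if_prime_length:
  assumes q: "prime (length xs)" and d: "\<not> length xs dvd d" and fixed: "rotate d xs = xs"
  shows "rotate1 xs = xs"
proof -
  have "coprime d (length xs)"
    using prime_imp_coprime[OF q d] by (simp add: coprime_commute)
  then obtain k where "[d * k = 1] (mod length xs)"
    using cong_solve_coprime_nat by auto
  then have "rotate (d * k) xs = rotate 1 xs"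
    using prime_gt_1_nat[OF q] by (metis cong_def mod_less rotate_conv_mod)
  then show ?thesis using rotate_mult_fixed[OF fixed] by simp
qed

definition rotations :: "'c list \<Rightarrow> 'c list set" where
  "rotations xs = range (\<lambda>i. rotate i xs)"

lemma self_in_rotations: "xs \<in> rotations xs"
  unfolding rotations_def by (metis rangeI rotate0 id_apply)

lemma rotations_rotate: "rotations (rotate i xs) = rotations xs"
proof (cases "xs = []")
  case False
  let ?n = "length xs"
  have "rotate j xs \<in> rotations (rotate i xs)" for j
  proof -
    have "rotate j xs = rotate (j + ?n * i) xs"
      by (metis mod_mult_self2 rotate_conv_mod)
    also have "j + ?n * i = (j + (?n - 1) * i) + i"
      using False by (cases xs) auto
    also have "rotate \<dots> xs = rotate (j + (?n - 1) * i) (rotate i xs)"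
      by (simp only: rotate_rotate)
    finally show ?thesis unfolding rotations_def by (metis rangeI)
  qed
  then show ?thesis unfolding rotations_def by (auto simp: rotate_rotate)
qed (simp add: rotations_def)

lemma rotations_eq_if_mem: "ys \<in> rotations xs \<Longrightarrow> rotations ys = rotations xs"
  unfolding rotations_def by (metis rangeE rotations_def rotations_rotate)

lemma card_rotations_prime:
  assumes q: "prime (length xs)" and nonfixed: "rotate1 xs \<noteq> xs"
  shows "card (rotations xs) = length xs"
proof -
  let ?n = "length xs"
  have "rotations xs = (\<lambda>i. rotate i xs) ` {..<?n}"
    using prime_gt_0_nat[OF q] unfolding rotations_def
    by (auto simp: image_iff intro: rotate_conv_mod)
  moreover have "inj_on (\<lambda>i. rotate i xs) {..<?n}"
  proof (rule linorder_inj_onI')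
    fix i j assume ij: "i \<in> {..<?n}" "j \<in> {..<?n}" "i < j"
    show "rotate i xs \<noteq> rotate j xs"
    proof
      assume eq: "rotate i xs = rotate j xs"
      have "rotate (j - i) (rotate i xs) = rotate i xs"
        using ij by (simp add: rotate_rotate flip: eq)
      then have "rotate1 (rotate i xs) = rotate i xs"
        using ij q by (intro rotate1_fixed_if_prime_length) (auto dest: dvd_imp_le)
      then show False using nonfixed rotate1_rotate_fixed_iff by blast
    qed
  qed
  ultimately show ?thesis by (simp add: card_image)
qed

lemma sum_rotations:
  assumes "\<And>xs. w (rotate1 xs) = w xs"
  shows "sum w (rotations xs) = int (card (rotations xs)) * w xs"
proof -
  have "w (rotate i xs) = w xs" for i
    by (induction i) (simp_all add: assms)
  then have "sum w (rotations xs) = sum (\<lambda>_. w xs) (rotations xs)"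
    unfolding rotations_def by (intro sum.cong) auto
  then show ?thesis by simp
qed

lemma sum_rotate1_invariant_cong_fixed:
  fixes w :: "'c list \<Rightarrow> int"
  assumes q: "prime q" and w: "\<And>xs. w (rotate1 xs) = w xs" and fin: "finite T"
    and T: "\<And>xs. xs \<in> T \<Longrightarrow> length xs = q \<and> rotate1 xs \<in> T"
  shows "[sum w T = sum w {xs\<in>T. rotate1 xs = xs}] (mod int q)"
proof -
  define N where "N = {xs\<in>T. rotate1 xs \<noteq> xs}"
  have rot_T: "rotate i xs \<in> T" if "xs \<in> T" for xs i
    using that T by (induction i) auto
  have rot_N: "rotations xs \<subseteq> N" if "xs \<in> N" for xs
    using that rot_T rotate1_rotate_fixed_iff unfolding N_def rotations_def by auto
  have N_Union: "N = \<Union> (rotations ` N)"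
    using rot_N self_in_rotations by blast
  have disjoint: "A \<inter> B = {}" if "A \<in> rotations ` N" "B \<in> rotations ` N" "A \<noteq> B" for A B
    using that rotations_eq_if_mem by blast
  have "int q dvd sum w A" if A: "A \<in> rotations ` N" for A
  proof -
    obtain xs where xs: "xs \<in> N" "A = rotations xs" using A by blast
    have "length xs = q" "rotate1 xs \<noteq> xs" using xs T unfolding N_def by auto
    then have "card (rotations xs) = q" using q card_rotations_prime by blast
    then show ?thesis using xs sum_rotations[of w, OF w] by simp
  qed
  moreover have "sum w N = (\<Sum>A\<in>rotations ` N. sum w A)"
  proof -
    have "finite A" if "A \<in> rotations ` N" for A
      using that rot_N finite_subset[of _ N] fin unfolding N_def by auto
    then show ?thesis
      by (subst N_Union) (simp add: sum.Union_disjoint disjoint)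
  qed
  ultimately have "int q dvd sum w N" by (simp add: dvd_sum)
  moreover have "sum w T = sum w N + sum w {xs\<in>T. rotate1 xs = xs}"
    using fin unfolding N_def by (subst sum.union_disjoint[symmetric]) (auto intro: sum.cong)
  ultimately show ?thesis by (simp add: cong_iff_dvd_diff)
qed

lemma prod_list_rotate1: "prod_list (rotate1 xs) = (prod_list xs :: 'a :: comm_monoid_mult)"
  by (cases xs) (simp_all add: mult.commute)

section \<open>Partitions and spans of block sums\<close>

lemma is_partition_finite:
  assumes "is_partition G Q" "finite (carrier G)"
  shows "finite Q"
proof -
  have "Q \<subseteq> Pow (carrier G)" using assms(1) unfolding is_partition_def by auto
  then show ?thesis by (rule finite_subset) (simp add: assms(2))
qed

lemma is_partition_eq: "is_partition G Q \<Longrightarrow> X \<in> Q \<Longrightarrow> Y \<in> Q \<Longrightarrow> x \<in> X \<Longrightarrow> x \<in> Y \<Longrightarrow> X = Y"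
  unfolding is_partition_def by blast

lemma is_partition_block:
  assumes "is_partition G Q" "x \<in> carrier G"
  obtains X where "X \<in> Q" "x \<in> X"
  using assms unfolding is_partition_def by blast

lemma sum_und_partition_block:
  assumes "is_partition G Q" "finite (carrier G)" "X \<in> Q" "g \<in> X"
  shows "(\<Sum>Y\<in>Q. c Y * und Y g) = c X"
proof -
  have "c Y * und Y g = (if Y = X then c Y else 0)" if "Y \<in> Q" for Y
  proof -
    have "g \<in> Y \<longleftrightarrow> Y = X"
      using is_partition_eq[OF assms(1) that assms(3) _ assms(4)] assms(4) by blast
    then show ?thesis by (simp add: und_def)
  qed
  then have "(\<Sum>Y\<in>Q. c Y * und Y g) = (\<Sum>Y\<in>Q. if Y = X then c Y else 0)"
    by (rule sum.cong[OF refl])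
  also have "\<dots> = c X" using is_partition_finite[OF assms(1,2)] assms(3) by simp
  finally show ?thesis .
qed

lemma sum_und_partition_outside:
  "is_partition G Q \<Longrightarrow> g \<notin> carrier G \<Longrightarrow> (\<Sum>Y\<in>Q. c Y * und Y g) = 0"
  unfolding is_partition_def und_def by auto

lemma zspan_iff:
  assumes "is_partition G Q" "finite (carrier G)"
  shows "f \<in> zspan Q \<longleftrightarrow> f \<in> ZG G \<and> (\<forall>Y\<in>Q. \<forall>y1\<in>Y. \<forall>y2\<in>Y. f y1 = f y2)"
proof
  assume "f \<in> zspan Q"
  then obtain c where c: "f = (\<lambda>g. \<Sum>Y\<in>Q. c Y * und Y g)" unfolding zspan_def by blast
  have "f \<in> ZG G"
    unfolding ZG_def c using sum_und_partition_outside[OF assms(1)] by simp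
  moreover have "\<forall>Y\<in>Q. \<forall>y1\<in>Y. \<forall>y2\<in>Y. f y1 = f y2"
    unfolding c using sum_und_partition_block[OF assms] by simp
  ultimately show "f \<in> ZG G \<and> (\<forall>Y\<in>Q. \<forall>y1\<in>Y. \<forall>y2\<in>Y. f y1 = f y2)" by blast
next
  assume f: "f \<in> ZG G \<and> (\<forall>Y\<in>Q. \<forall>y1\<in>Y. \<forall>y2\<in>Y. f y1 = f y2)"
  have "f g = (\<Sum>Y\<in>Q. f (SOME y. y \<in> Y) * und Y g)" for g
  proof (cases "g \<in> carrier G")
    case True
    then obtain X where X: "X \<in> Q" "g \<in> X" using is_partition_block[OF assms(1)] by blast
    then have "f (SOME y. y \<in> X) = f g"
      using f someI[of "\<lambda>y. y \<in> X"] by blast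
    then show ?thesis using sum_und_partition_block[OF assms X] by simp
  qed (use f sum_und_partition_outside[OF assms(1)] in \<open>simp add: ZG_def\<close>)
  then have "f = (\<lambda>g. \<Sum>Y\<in>Q. f (SOME y. y \<in> Y) * und Y g)" by (rule ext)
  then show "f \<in> zspan Q" unfolding zspan_def by (intro CollectI exI)
qed

lemma is_partition_inj_image_eq:
  assumes "is_partition G S" "inj_on \<sigma> (carrier G)" "Z \<in> S" "Z' \<in> S" "\<sigma> ` Z \<inter> \<sigma> ` Z' \<noteq> {}"
  shows "Z = Z'"
proof -
  obtain z z' where z: "z \<in> Z" "z' \<in> Z'" "\<sigma> z = \<sigma> z'" using assms(5) by blast
  moreover have "Z \<subseteq> carrier G" "Z' \<subseteq> carrier G"
    using assms(1,3,4) unfolding is_partition_def by auto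
  ultimately have "z = z'" using inj_onD[OF assms(2)] by blast
  then show ?thesis using is_partition_eq[OF assms(1,3,4)] z by blast
qed

lemma is_partition_image_block:
  assumes P: "is_partition G S" "finite (carrier G)"
    and \<sigma>: "inj_on \<sigma> (carrier G)" "\<sigma> ` carrier G \<subseteq> carrier G"
    and union: "\<And>X Y. X \<in> S \<Longrightarrow> Y \<in> S \<Longrightarrow> Y \<inter> \<sigma> ` X \<noteq> {} \<Longrightarrow> Y \<subseteq> \<sigma> ` X"
    and X: "X \<in> S"
  shows "\<sigma> ` X \<in> S"
proof -
  have sub: "Z \<subseteq> carrier G" "Z \<noteq> {}" if "Z \<in> S" for Z
    using P(1) that unfolding is_partition_def by auto
  define f where "f Z = (SOME Y. Y \<in> S \<and> Y \<subseteq> \<sigma> ` Z)" for Z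
  have f: "f Z \<in> S \<and> f Z \<subseteq> \<sigma> ` Z" if Z: "Z \<in> S" for Z
  proof -
    obtain z where z: "z \<in> Z" using sub[OF Z] by blast
    then obtain Y where "Y \<in> S" "\<sigma> z \<in> Y"
      using is_partition_block[OF P(1)] \<sigma>(2) sub[OF Z] by blast
    then have "\<exists>Y. Y \<in> S \<and> Y \<subseteq> \<sigma> ` Z" using union[OF Z] z by blast
    then show ?thesis unfolding f_def by (rule someI_ex)
  qed
  note images_disjoint = is_partition_inj_image_eq[OF P(1) \<sigma>(1)]
  have "inj_on f S"
  proof (rule inj_onI)
    fix Z Z' assume Z: "Z \<in> S" "Z' \<in> S" and eq: "f Z = f Z'"
    have "f Z \<subseteq> \<sigma> ` Z \<inter> \<sigma> ` Z'" using f[OF Z(1)] f[OF Z(2)] eq by simp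
    moreover have "f Z \<noteq> {}" using sub f[OF Z(1)] by blast
    ultimately show "Z = Z'" using images_disjoint[OF Z] by blast
  qed
  moreover have "f ` S \<subseteq> S" using f by blast
  ultimately have fS: "f ` S = S"
    using endo_inj_surj[OF is_partition_finite[OF P]] by blast
  have "\<sigma> ` X \<subseteq> f X"
  proof
    fix z assume z: "z \<in> \<sigma> ` X"
    then obtain Y where Y: "Y \<in> S" "z \<in> Y"
      using is_partition_block[OF P(1)] \<sigma>(2) sub[OF X] by blast
    then obtain Z where Z: "Z \<in> S" "Y = f Z" using fS by blast
    then have "z \<in> \<sigma> ` Z" using Y f by blast
    then have "Z = X" using images_disjoint[OF Z(1) X] z by blast
    then show "z \<in> f X" using Y Z by simp
  qed
  then have "\<sigma> ` X = f X" using f[OF X] by (intro subset_antisym) simp_all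
  then show ?thesis using f[OF X] by simp
qed

section \<open>Convolution in the group ring\<close>

lemma (in group) inv_mult_cancel_left [simp]:
  "x \<in> carrier G \<Longrightarrow> y \<in> carrier G \<Longrightarrow> inv x \<otimes> (x \<otimes> y) = y"
  by (simp add: m_assoc[symmetric])

lemma (in group) mult_inv_cancel_left [simp]:
  "x \<in> carrier G \<Longrightarrow> y \<in> carrier G \<Longrightarrow> x \<otimes> (inv x \<otimes> y) = y"
  by (simp add: m_assoc[symmetric])

lemma (in group) sum_carrier_reindex_mult:
  "y \<in> carrier G \<Longrightarrow> (\<Sum>x\<in>carrier G. F x) = (\<Sum>w\<in>carrier G. F (y \<otimes> w))"
  by (rule sum.reindex_bij_witness[where j="\<lambda>x. inv y \<otimes> x" and i="\<lambda>w. y \<otimes> w"]) auto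

lemma (in group) sum_carrier_reindex_conj:
  "h \<in> carrier G \<Longrightarrow> (\<Sum>x\<in>carrier G. F x) = (\<Sum>y\<in>carrier G. F (h \<otimes> y \<otimes> inv h))"
  by (rule sum.reindex_bij_witness[where j="\<lambda>x. inv h \<otimes> x \<otimes> h" and i="\<lambda>y. h \<otimes> y \<otimes> inv h"])
     (auto simp: m_assoc)

lemma und_ZG: "X \<subseteq> carrier G \<Longrightarrow> und X \<in> ZG G"
  unfolding ZG_def und_def by auto

lemma gmult_ZG: "gmult G f h \<in> ZG G"
  unfolding ZG_def gmult_def by simp

lemma (in group) gmult_assoc:
  "gmult G (gmult G f g) h = gmult G f (gmult G g h)"
proof (rule ext)
  fix z
  show "gmult G (gmult G f g) h z = gmult G f (gmult G g h) z"
  proof (cases "z \<in> carrier G")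
    case False then show ?thesis by (simp add: gmult_def)
  next
    case z: True
    have "gmult G (gmult G f g) h z = (\<Sum>x\<in>carrier G. (\<Sum>y\<in>carrier G. f y * g (inv y \<otimes> x)) * h (inv x \<otimes> z))"
      using z by (simp add: gmult_def)
    also have "\<dots> = (\<Sum>x\<in>carrier G. \<Sum>y\<in>carrier G. f y * (g (inv y \<otimes> x) * h (inv x \<otimes> z)))"
      by (simp add: sum_distrib_right mult.assoc)
    also have "\<dots> = (\<Sum>y\<in>carrier G. \<Sum>x\<in>carrier G. f y * (g (inv y \<otimes> x) * h (inv x \<otimes> z)))"
      by (rule sum.swap)
    also have "\<dots> = (\<Sum>y\<in>carrier G. f y * (\<Sum>x\<in>carrier G. g (inv y \<otimes> x) * h (inv x \<otimes> z)))"
      by (simp add: sum_distrib_left)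
    also have "\<dots> = (\<Sum>y\<in>carrier G. f y * (\<Sum>w\<in>carrier G. g w * h (inv w \<otimes> (inv y \<otimes> z))))"
    proof (rule sum.cong[OF refl])
      fix y assume y: "y \<in> carrier G"
      have "(\<Sum>x\<in>carrier G. g (inv y \<otimes> x) * h (inv x \<otimes> z)) =
            (\<Sum>w\<in>carrier G. g (inv y \<otimes> (y \<otimes> w)) * h (inv (y \<otimes> w) \<otimes> z))"
        by (rule sum_carrier_reindex_mult[OF y])
      also have "\<dots> = (\<Sum>w\<in>carrier G. g w * h (inv w \<otimes> (inv y \<otimes> z)))"
        using y z by (intro sum.cong refl) (simp add: inv_mult_group m_assoc[symmetric])
      finally show "f y * (\<Sum>x\<in>carrier G. g (inv y \<otimes> x) * h (inv x \<otimes> z)) =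
            f y * (\<Sum>w\<in>carrier G. g w * h (inv w \<otimes> (inv y \<otimes> z)))" by simp
    qed
    also have "\<dots> = gmult G f (gmult G g h) z"
      using z by (simp add: gmult_def)
    finally show ?thesis .
  qed
qed

definition classfun :: "('a, 'b) monoid_scheme \<Rightarrow> ('a \<Rightarrow> int) \<Rightarrow> bool" where
  "classfun G a \<longleftrightarrow> (\<forall>h\<in>carrier G. \<forall>x\<in>carrier G. a (h \<otimes>\<^bsub>G\<^esub> x \<otimes>\<^bsub>G\<^esub> inv\<^bsub>G\<^esub> h) = a x)"

lemma (in group) classfun_gmult:
  assumes "classfun G a" "classfun G b"
  shows "classfun G (gmult G a b)"
  unfolding classfun_def
proof (intro ballI)
  fix h z assume h: "h \<in> carrier G" and z: "z \<in> carrier G"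
  have "gmult G a b (h \<otimes> z \<otimes> inv h)
      = (\<Sum>y\<in>carrier G. a (h \<otimes> y \<otimes> inv h) * b (inv (h \<otimes> y \<otimes> inv h) \<otimes> (h \<otimes> z \<otimes> inv h)))"
    using h z by (simp add: gmult_def) (rule sum_carrier_reindex_conj[OF h])
  also have "\<dots> = (\<Sum>y\<in>carrier G. a y * b (inv y \<otimes> z))"
  proof (intro sum.cong refl)
    fix y assume y: "y \<in> carrier G"
    have "inv (h \<otimes> y \<otimes> inv h) \<otimes> (h \<otimes> z \<otimes> inv h) = h \<otimes> (inv y \<otimes> z) \<otimes> inv h"
      using h y z by (simp add: inv_mult_group m_assoc)
    then show "a (h \<otimes> y \<otimes> inv h) * b (inv (h \<otimes> y \<otimes> inv h) \<otimes> (h \<otimes> z \<otimes> inv h)) = a y * b (inv y \<otimes> z)"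
      using assms h y z by (simp add: classfun_def)
  qed
  also have "\<dots> = gmult G a b z" using z by (simp add: gmult_def)
  finally show "gmult G a b (h \<otimes> z \<otimes> inv h) = gmult G a b z" .
qed

lemma (in group) conj_eq_one_iff:
  assumes "h \<in> carrier G" "x \<in> carrier G"
  shows "h \<otimes> x \<otimes> inv h = \<one> \<longleftrightarrow> x = \<one>"
proof
  assume "h \<otimes> x \<otimes> inv h = \<one>"
  moreover have "x = inv h \<otimes> (h \<otimes> x \<otimes> inv h) \<otimes> h" using assms by (simp add: m_assoc)
  ultimately show "x = \<one>" using assms by simp
qed (use assms in simp)

lemma (in group) classfun_und_one: "classfun G (und {\<one>})"
  unfolding classfun_def und_def by (auto simp: conj_eq_one_iff)

locale finite_group = group G for G (structure) +
  assumes finite_carrier: "finite (carrier G)"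

context finite_group
begin

lemma gmult_und_left:
  assumes "h \<in> carrier G" "z \<in> carrier G"
  shows "gmult G (und {h}) a z = a (inv h \<otimes> z)"
proof -
  have "gmult G (und {h}) a z = (\<Sum>x\<in>carrier G. if x = h then a (inv h \<otimes> z) else 0)"
    using assms unfolding gmult_def und_def by (auto intro!: sum.cong)
  then show ?thesis using assms finite_carrier by simp
qed

lemma gmult_und_right:
  assumes "h \<in> carrier G" "z \<in> carrier G"
  shows "gmult G a (und {h}) z = a (z \<otimes> inv h)"
proof -
  have "inv x \<otimes> z = h \<longleftrightarrow> x = z \<otimes> inv h" if "x \<in> carrier G" for x
    using assms that by (metis inv_closed inv_solve_left inv_solve_right m_closed)
  then have "gmult G a (und {h}) z = (\<Sum>x\<in>carrier G. if x = z \<otimes> inv h then a x else 0)"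
    using assms unfolding gmult_def und_def by (auto intro!: sum.cong)
  then show ?thesis using assms finite_carrier by simp
qed

lemma gmult_one_left:
  assumes "f \<in> ZG G"
  shows "gmult G (und {\<one>}) f = f"
proof
  fix z
  show "gmult G (und {\<one>}) f z = f z"
    using assms gmult_und_left[of \<one> z f] by (cases "z \<in> carrier G") (auto simp: ZG_def gmult_def)
qed

lemma central_imp_classfun:
  assumes "central G {a}"
  shows "classfun G a"
  unfolding classfun_def
proof (intro ballI)
  fix h x assume h: "h \<in> carrier G" and x: "x \<in> carrier G"
  have "gmult G a (und {h}) (h \<otimes> x) = gmult G (und {h}) a (h \<otimes> x)"
    using assms und_ZG[of "{h}" G] h unfolding central_def by simp
  then show "a (h \<otimes> x \<otimes> inv h) = a x"
    using h x by (simp add: gmult_und_right gmult_und_left m_assoc[symmetric])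
qed

end


primrec gpow :: "('a, 'b) monoid_scheme \<Rightarrow> ('a \<Rightarrow> int) \<Rightarrow> nat \<Rightarrow> 'a \<Rightarrow> int" where
  "gpow G a 0 = und {\<one>\<^bsub>G\<^esub>}"
| "gpow G a (Suc k) = gmult G a (gpow G a k)"

definition gprod :: "('a, 'b) monoid_scheme \<Rightarrow> 'a list \<Rightarrow> 'a" where
  "gprod G xs = foldr (\<otimes>\<^bsub>G\<^esub>) xs \<one>\<^bsub>G\<^esub>"

definition tuples :: "('a, 'b) monoid_scheme \<Rightarrow> nat \<Rightarrow> 'a \<Rightarrow> 'a list set" where
  "tuples G k g = {xs. set xs \<subseteq> carrier G \<and> length xs = k \<and> gprod G xs = g}"

lemma gprod_Nil [simp]: "gprod G [] = \<one>\<^bsub>G\<^esub>"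
  by (simp add: gprod_def)

lemma gprod_Cons [simp]: "gprod G (x # xs) = x \<otimes>\<^bsub>G\<^esub> gprod G xs"
  by (simp add: gprod_def)

lemma (in group) gprod_closed [simp]: "set xs \<subseteq> carrier G \<Longrightarrow> gprod G xs \<in> carrier G"
  by (induction xs) auto

lemma (in group) gprod_append:
  "set xs \<subseteq> carrier G \<Longrightarrow> set ys \<subseteq> carrier G \<Longrightarrow> gprod G (xs @ ys) = gprod G xs \<otimes> gprod G ys"
  by (induction xs) (auto simp: m_assoc)

lemma (in group) gprod_replicate: "x \<in> carrier G \<Longrightarrow> gprod G (replicate k x) = x [^] k"
  by (induction k) (simp_all add: nat_pow_mult[of x 1, simplified])

lemma (in group) gprod_rotate1:
  "set (x # xs) \<subseteq> carrier G \<Longrightarrow> gprod G (rotate1 (x # xs)) = inv x \<otimes> gprod G (x # xs) \<otimes> x"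
  by (simp add: gprod_append m_assoc)

context finite_group
begin

lemma finite_tuples: "finite (tuples G k g)"
  unfolding tuples_def
  by (rule finite_subset[OF _ finite_lists_length_eq[OF finite_carrier, of k]]) auto

lemma gpow_ZG: "gpow G a k \<in> ZG G"
  by (cases k) (simp_all add: und_ZG gmult_ZG)

lemma gpow_eq_sum_tuples:
  "g \<in> carrier G \<Longrightarrow> gpow G a k g = (\<Sum>xs\<in>tuples G k g. prod_list (map a xs))"
proof (induction k arbitrary: g)
  case 0
  have "tuples G 0 g = (if g = \<one> then {[]} else {})" unfolding tuples_def by auto
  then show ?case by (simp add: und_def)
next
  case (Suc k)
  have split: "bij_betw (\<lambda>(x, xs). x # xs) (SIGMA x:carrier G. tuples G k (inv x \<otimes> g)) (tuples G (Suc k) g)"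
  proof (rule bij_betwI[where g="\<lambda>ys. (hd ys, tl ys)"])
    show "(\<lambda>ys. (hd ys, tl ys)) \<in> tuples G (Suc k) g \<rightarrow> (SIGMA x:carrier G. tuples G k (inv x \<otimes> g))"
      using Suc.prems by (auto simp: tuples_def length_Suc_conv Pi_def)
  qed (use Suc.prems in \<open>auto simp: tuples_def length_Suc_conv\<close>)
  have "gpow G a (Suc k) g = (\<Sum>x\<in>carrier G. \<Sum>xs\<in>tuples G k (inv x \<otimes> g). a x * prod_list (map a xs))"
    using Suc by (simp add: gmult_def sum_distrib_left)
  also have "\<dots> = (\<Sum>(x, xs)\<in>(SIGMA x:carrier G. tuples G k (inv x \<otimes> g)). prod_list (map a (x # xs)))"
    by (subst sum.Sigma) (auto simp: finite_carrier finite_tuples)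
  also have "\<dots> = (\<Sum>ys\<in>tuples G (Suc k) g. prod_list (map a ys))"
    using sum.reindex_bij_betw[OF split, of "\<lambda>ys. prod_list (map a ys)"]
    by (simp add: case_prod_unfold)
  finally show ?case .
qed

lemma classfun_gpow: "classfun G a \<Longrightarrow> classfun G (gpow G a k)"
  by (induction k) (simp_all add: classfun_und_one classfun_gmult)

lemma gpow_gmult:
  assumes "central G {b}"
  shows "gpow G (gmult G a b) k = gmult G (gpow G a k) (gpow G b k)"
proof (induction k)
  case 0
  show ?case using gmult_one_left[OF und_ZG[of "{\<one>}"]] by simp
next
  case (Suc k)
  let ?a = "gpow G a k" and ?b = "gpow G b k"
  have comm: "gmult G b ?a = gmult G ?a b"
    using assms gpow_ZG unfolding central_def by blast
  have "gpow G (gmult G a b) (Suc k) = gmult G a (gmult G (gmult G b ?a) ?b)"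
    using Suc by (simp add: gmult_assoc)
  also have "\<dots> = gmult G (gmult G a ?a) (gmult G b ?b)"
    unfolding comm by (simp add: gmult_assoc)
  finally show ?case by simp
qed

lemma gmult_cong:
  assumes "\<And>z. z \<in> carrier G \<Longrightarrow> [f z = f' z] (mod M)" "\<And>z. z \<in> carrier G \<Longrightarrow> [h z = h' z] (mod M)"
  shows "[gmult G f h z = gmult G f' h' z] (mod M)"
  using assms by (cases "z \<in> carrier G") (auto simp: gmult_def intro!: cong_sum cong_mult)

end

section \<open>Power maps and conjugacy classes\<close>

lemma (in group) int_pow_cong_order:
  assumes "x \<in> carrier G" "[m = k] (mod int (order G))"
  shows "x [^] m = x [^] k"
proof -
  have "int (ord x) dvd int (order G)"
    using ord_dvd_group_order[OF assms(1)] by simp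
  moreover have "int (order G) dvd k - m"
    using cong_sym[OF assms(2)] by (simp add: cong_iff_dvd_diff)
  ultimately show ?thesis
    using assms(1) int_pow_eq dvd_trans by blast
qed

context finite_group
begin

lemma order_gt_0: "order G > 0"
  using finite_carrier order_gt_0_iff_finite by blast

lemma coprime_int_pow_bij:
  assumes "coprime m (int (order G))"
  shows "bij_betw (\<lambda>x. x [^] m) (carrier G) (carrier G)"
proof -
  obtain m' where m': "[m * m' = 1] (mod int (order G))"
    using cong_solve_coprime_int assms by blast
  have inv: "(x [^] m) [^] m' = x" if "x \<in> carrier G" for x
    using int_pow_cong_order[OF that m'] that by (simp add: int_pow_pow)
  have "(x [^] m') [^] m = x" if "x \<in> carrier G" for x
    using inv[OF that] that by (simp add: int_pow_pow mult.commute)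
  then show ?thesis
    by (intro bij_betwI[where g="\<lambda>x. x [^] m'"]) (auto simp: inv)
qed

lemma coprime_int_pow_inj:
  "coprime m (int (order G)) \<Longrightarrow> x \<in> carrier G \<Longrightarrow> y \<in> carrier G \<Longrightarrow> x [^] m = y [^] m \<Longrightarrow> x = y"
  using coprime_int_pow_bij by (metis bij_betw_imp_inj_on inj_onD)

lemma coprime_int_pow_surj:
  assumes "coprime m (int (order G))" "g \<in> carrier G"
  obtains y where "y \<in> carrier G" "y [^] m = g"
  using bij_betw_imp_surj_on[OF coprime_int_pow_bij[OF assms(1)]] assms(2) by (metis imageE)

end

definition conj_class :: "('a, 'b) monoid_scheme \<Rightarrow> 'a \<Rightarrow> 'a set" where
  "conj_class G g = (\<lambda>h. h \<otimes>\<^bsub>G\<^esub> g \<otimes>\<^bsub>G\<^esub> inv\<^bsub>G\<^esub> h) ` carrier G"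

context group
begin

lemma conj_class_subset: "g \<in> carrier G \<Longrightarrow> conj_class G g \<subseteq> carrier G"
  unfolding conj_class_def by auto

lemma conj_in_conj_class:
  assumes "g \<in> carrier G" "h \<in> carrier G" "c \<in> conj_class G g"
  shows "h \<otimes> c \<otimes> inv h \<in> conj_class G g"
proof -
  obtain k where k: "k \<in> carrier G" "c = k \<otimes> g \<otimes> inv k"
    using assms(3) unfolding conj_class_def by auto
  then have "h \<otimes> c \<otimes> inv h = (h \<otimes> k) \<otimes> g \<otimes> inv (h \<otimes> k)"
    using assms by (simp add: inv_mult_group m_assoc)
  then show ?thesis unfolding conj_class_def using k assms by auto
qed

lemma classfun_on_conj_class: "classfun G a \<Longrightarrow> c \<in> conj_class G g \<Longrightarrow> g \<in> carrier G \<Longrightarrow> a c = a g"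
  unfolding classfun_def conj_class_def by auto

lemma conj_pow: "h \<in> carrier G \<Longrightarrow> x \<in> carrier G \<Longrightarrow> (h \<otimes> x \<otimes> inv h) [^] (k::nat) = h \<otimes> x [^] k \<otimes> inv h"
  by (induction k) (simp_all add: m_assoc)

lemma pow_image_conj_class:
  "y \<in> carrier G \<Longrightarrow> (\<lambda>x. x [^] (k::nat)) ` conj_class G y = conj_class G (y [^] k)"
  unfolding conj_class_def by (auto simp: image_image conj_pow intro!: image_cong)

lemma gprod_rotate1_conj_class:
  assumes "g \<in> carrier G" "set xs \<subseteq> carrier G" "gprod G xs \<in> conj_class G g"
  shows "gprod G (rotate1 xs) \<in> conj_class G g"
proof (cases xs)
  case (Cons x xs')
  then have "gprod G (rotate1 xs) = inv x \<otimes> gprod G xs \<otimes> inv (inv x)"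
    using gprod_rotate1[of x xs'] assms(2) by simp
  also have "\<dots> \<in> conj_class G g"
    using assms Cons by (intro conj_in_conj_class) auto
  finally show ?thesis .
qed (use assms in simp)

end

context finite_group
begin

lemma card_conj_class_dvd_order:
  assumes g: "g \<in> carrier G"
  shows "card (conj_class G g) dvd order G"
proof -
  let ?\<phi> = "\<lambda>h. (\<lambda>x \<in> carrier G. h \<otimes> x \<otimes> inv h)"
  have "orbit G ?\<phi> g = conj_class G g"
    using g unfolding orbit_def conj_class_def by force
  then have "order G = card (conj_class G g) * card (stabilizer G ?\<phi> g)"
    using group_action.orbit_stabilizer_theorem[OF action_by_conjugation g] by simp
  then show ?thesis by (rule dvdI)
qed

lemma coprime_card_conj_class:
  assumes q: "prime q" "\<not> q dvd order G" and g: "g \<in> carrier G"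
  shows "coprime (int (card (conj_class G g))) (int q)"
proof -
  have "\<not> q dvd card (conj_class G g)"
    using card_conj_class_dvd_order[OF g] q(2) dvd_trans by blast
  then have "coprime q (card (conj_class G g))" using prime_imp_coprime[OF q(1)] by blast
  then show ?thesis by (simp add: coprime_commute[of "card (conj_class G g)"])
qed

lemma pow_preimage_conj_class:
  assumes "coprime (int k) (int (order G))" "y \<in> carrier G" "x \<in> carrier G"
  shows "x [^] k \<in> conj_class G (y [^] k) \<longleftrightarrow> x \<in> conj_class G y"
proof
  assume "x [^] k \<in> conj_class G (y [^] k)"
  then obtain z where z: "z \<in> conj_class G y" "x [^] k = z [^] k"
    using pow_image_conj_class[OF assms(2)] by blast
  then have "x = z"
    using coprime_int_pow_inj[OF assms(1), of x z] conj_class_subset assms by (auto simp: int_pow_int)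
  then show "x \<in> conj_class G y" using z by simp
qed (use pow_image_conj_class[OF assms(2)] in blast)

lemma card_conj_class_pow:
  assumes "coprime (int k) (int (order G))" "y \<in> carrier G"
  shows "card (conj_class G (y [^] k)) = card (conj_class G y)"
  unfolding pow_image_conj_class[OF assms(2), symmetric]
  using coprime_int_pow_inj[OF assms(1)] conj_class_subset[OF assms(2)]
  by (intro card_image inj_onI) (auto simp: int_pow_int)

section \<open>The Frobenius congruence\<close>

lemma sum_gpow_conj_class:
  assumes "C \<subseteq> carrier G"
  shows "(\<Sum>c\<in>C. gpow G a k c)
       = (\<Sum>xs\<in>{xs. set xs \<subseteq> carrier G \<and> length xs = k \<and> gprod G xs \<in> C}. prod_list (map a xs))"
proof -
  have "(\<Sum>c\<in>C. gpow G a k c) = (\<Sum>c\<in>C. \<Sum>xs\<in>tuples G k c. prod_list (map a xs))"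
    using assms by (intro sum.cong refl gpow_eq_sum_tuples) auto
  also have "\<dots> = (\<Sum>xs\<in>(\<Union>c\<in>C. tuples G k c). prod_list (map a xs))"
    using finite_subset[OF assms finite_carrier]
    by (subst sum.UNION_disjoint) (auto simp: finite_tuples[unfolded tuples_def] tuples_def)
  also have "(\<Union>c\<in>C. tuples G k c) = {xs. set xs \<subseteq> carrier G \<and> length xs = k \<and> gprod G xs \<in> C}"
    unfolding tuples_def by auto
  finally show ?thesis .
qed

lemma sum_rotate1_fixed_tuples:
  assumes "k > 0"
  shows "(\<Sum>xs\<in>{xs. (set xs \<subseteq> carrier G \<and> length xs = k \<and> gprod G xs \<in> C) \<and> rotate1 xs = xs}.
            prod_list (map a xs))
       = (\<Sum>x\<in>{x \<in> carrier G. x [^] k \<in> C}. a x ^ k)"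
proof -
  have "{xs. (set xs \<subseteq> carrier G \<and> length xs = k \<and> gprod G xs \<in> C) \<and> rotate1 xs = xs}
      = replicate k ` {x \<in> carrier G. x [^] k \<in> C}"
  proof (intro equalityI subsetI)
    fix xs assume "xs \<in> {xs. (set xs \<subseteq> carrier G \<and> length xs = k \<and> gprod G xs \<in> C) \<and> rotate1 xs = xs}"
    then have xs: "set xs \<subseteq> carrier G" "length xs = k" "gprod G xs \<in> C" "rotate1 xs = xs" by auto
    have "card (set xs) = 1"
      using rotate1_fixpoint_card[OF xs(4)] xs(2) assms by auto
    then obtain x where "set xs = {x}"
      by (rule card_1_singletonE)
    then have "xs = replicate k x" "x \<in> carrier G"
      using xs replicate_length_same[of xs x] by auto
    then show "xs \<in> replicate k ` {x \<in> carrier G. x [^] k \<in> C}"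
      using xs(3) gprod_replicate by auto
  qed (use assms in \<open>auto simp: gprod_replicate\<close>)
  moreover have "inj_on (replicate k) {x \<in> carrier G. x [^] k \<in> C}"
    using assms by (intro inj_onI) (simp add: replicate_eq_replicate)
  ultimately show ?thesis by (simp add: sum.reindex)
qed

lemma classfun_gpow_prime_cong:
  assumes q: "prime q" "\<not> q dvd order G" and a: "classfun G a" and y: "y \<in> carrier G"
  shows "[gpow G a q (y [^] q) = a y] (mod int q)"
proof -
  define C where "C = conj_class G (y [^] q)"
  define T where "T = {xs. set xs \<subseteq> carrier G \<and> length xs = q \<and> gprod G xs \<in> C}"
  have cop: "coprime (int q) (int (order G))"
    using prime_imp_coprime[OF q] by simp
  have C: "C \<subseteq> carrier G"
    using conj_class_subset y unfolding C_def by simp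
  have preimage: "{x \<in> carrier G. x [^] q \<in> C} = conj_class G y"
    using pow_preimage_conj_class[OF cop y] conj_class_subset[OF y] unfolding C_def by auto
  have card_C: "card C = card (conj_class G y)"
    unfolding C_def by (rule card_conj_class_pow[OF cop y])
  have "int (card C) * gpow G a q (y [^] q) = (\<Sum>c\<in>C. gpow G a q c)"
    using classfun_on_conj_class[OF classfun_gpow[OF a]] y unfolding C_def by simp
  also have "\<dots> = (\<Sum>xs\<in>T. prod_list (map a xs))"
    unfolding T_def by (rule sum_gpow_conj_class[OF C(1)])
  also have "[\<dots> = (\<Sum>xs\<in>{xs\<in>T. rotate1 xs = xs}. prod_list (map a xs))] (mod int q)"
  proof (rule sum_rotate1_invariant_cong_fixed[OF q(1)])
    show "finite T"
      unfolding T_def by (rule finite_subset[OF _ finite_lists_length_eq[OF finite_carrier, of q]]) auto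
    show "length xs = q \<and> rotate1 xs \<in> T" if "xs \<in> T" for xs
      using that gprod_rotate1_conj_class[of "y [^] q" xs] y unfolding T_def C_def by auto
  qed (simp add: prod_list_rotate1 flip: rotate1_map)
  also have "(\<Sum>xs\<in>{xs\<in>T. rotate1 xs = xs}. prod_list (map a xs)) = (\<Sum>x\<in>conj_class G y. a x ^ q)"
    using sum_rotate1_fixed_tuples[OF prime_gt_0_nat[OF q(1)], where C = C and a = a] preimage by (simp add: T_def)
  also have "\<dots> = int (card C) * a y ^ q"
    using classfun_on_conj_class[OF a] y card_C by simp
  also have "[\<dots> = int (card C) * a y] (mod int q)"
    by (intro cong_mult cong_refl int_prime_pow_cong_self[OF q(1)])
  finally have "[int (card C) * gpow G a q (y [^] q) = int (card C) * a y] (mod int q)" .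
  moreover have "coprime (int (card C)) (int q)"
    unfolding C_def by (rule coprime_card_conj_class[OF q]) (simp add: y)
  ultimately show ?thesis by (simp add: cong_mult_lcancel)
qed

end

section \<open>Power-invariant elements\<close>

definition power_invariant :: "('a, 'b) monoid_scheme \<Rightarrow> ('a \<Rightarrow> int) \<Rightarrow> bool" where
  "power_invariant G a \<longleftrightarrow>
     (\<forall>x\<in>carrier G. \<forall>m. coprime m (int (order G)) \<longrightarrow> a (x [^]\<^bsub>G\<^esub> m) = a x)"

context finite_group
begin

lemma gpow_prime_cong_self:
  assumes q: "prime q" "\<not> q dvd order G" and a: "classfun G a" "\<forall>x\<in>carrier G. a (x [^] q) = a x"
    and z: "z \<in> carrier G"
  shows "[gpow G a q z = a z] (mod int q)"
proof -
  have "coprime (int q) (int (order G))"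
    using prime_imp_coprime[OF q] by simp
  then obtain y where y: "y \<in> carrier G" "y [^] int q = z"
    using coprime_int_pow_surj[OF _ z] by blast
  then have yz: "y [^] q = z" by (simp add: int_pow_int)
  have "a (y [^] q) = a y" using a(2) y(1) by blast
  then show ?thesis
    using classfun_gpow_prime_cong[OF q a(1) y(1)] yz by simp
qed

lemma gmult_pow_prime_cong:
  assumes q: "prime q" "\<not> q dvd order G" and ab: "central G {a}" "central G {b}"
    and inv: "\<forall>x\<in>carrier G. a (x [^] q) = a x" "\<forall>x\<in>carrier G. b (x [^] q) = b x"
    and y: "y \<in> carrier G"
  shows "[gmult G a b (y [^] q) = gmult G a b y] (mod int q)"
proof -
  have ca: "classfun G a" and cb: "classfun G b"
    using central_imp_classfun ab by auto
  have "[gpow G (gmult G a b) q (y [^] q) = gmult G a b (y [^] q)] (mod int q)"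
    unfolding gpow_gmult[OF ab(2)]
    by (rule gmult_cong) (use gpow_prime_cong_self[OF q ca inv(1)] gpow_prime_cong_self[OF q cb inv(2)] in auto)
  moreover have "[gpow G (gmult G a b) q (y [^] q) = gmult G a b y] (mod int q)"
    by (rule classfun_gpow_prime_cong[OF q classfun_gmult[OF ca cb] y])
  ultimately show ?thesis
    using cong_sym cong_trans by blast
qed

lemma power_invariant_pow_prime:
  assumes "power_invariant G f" "prime p" "\<not> p dvd order G" "x \<in> carrier G"
  shows "f (x [^] p) = f x"
proof -
  have "coprime (int p) (int (order G))"
    using prime_imp_coprime[OF assms(2,3)] by simp
  then have "f (x [^] int p) = f x"
    using assms(1,4) unfolding power_invariant_def by blast
  then show ?thesis by (simp add: int_pow_int)
qed

lemma power_invariant_if_prime_pow_invariant: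
  fixes M :: nat
  assumes "\<And>p y. prime p \<Longrightarrow> M < p \<Longrightarrow> y \<in> carrier G \<Longrightarrow> f (y [^] p) = f y"
  shows "power_invariant G f"
  unfolding power_invariant_def
proof (intro ballI allI impI)
  fix x m assume x: "x \<in> carrier G" and m: "coprime m (int (order G))"
  obtain k where k: "[int k = m] (mod int (order G))" "\<forall>y\<in>carrier G. f (y [^] k) = f y"
  proof (rule coprime_exponent_reduction[OF order_gt_0 m, of "\<lambda>k. \<forall>y\<in>carrier G. f (y [^] k) = f y" M])
    show "\<forall>y\<in>carrier G. f (y [^] (p * k)) = f y"
      if p: "prime p" "M < p" and k: "\<forall>y\<in>carrier G. f (y [^] k) = f y" for p k
    proof
      fix y assume y: "y \<in> carrier G"
      have "f (y [^] (p * k)) = f ((y [^] k) [^] p)"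
        using y by (simp add: nat_pow_pow mult.commute)
      also have "\<dots> = f y" using assms[OF p] k y by simp
      finally show "f (y [^] (p * k)) = f y" .
    qed
  qed auto
  have "x [^] m = x [^] k"
    using int_pow_cong_order[OF x cong_sym[OF k(1)]] by (simp add: int_pow_int)
  then show "f (x [^] m) = f x" using k(2) x by simp
qed

lemma power_invariant_gmult:
  assumes ab: "central G {a}" "central G {b}" and inv: "power_invariant G a" "power_invariant G b"
  shows "power_invariant G (gmult G a b)"
proof -
  define B where "B = (\<Sum>z\<in>carrier G. \<bar>gmult G a b z\<bar>)"
  have B: "\<bar>gmult G a b z\<bar> \<le> B" if "z \<in> carrier G" for z
    unfolding B_def using that finite_carrier by (intro member_le_sum) auto
  show ?thesis
  proof (rule power_invariant_if_prime_pow_invariant[where M = "max (nat (2 * B)) (order G)"])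
    fix p y assume p: "prime p" "max (nat (2 * B)) (order G) < p" and y: "y \<in> carrier G"
    have p_order: "\<not> p dvd order G"
      using p order_gt_0 by (auto dest: dvd_imp_le)
    show "gmult G a b (y [^] p) = gmult G a b y"
    proof (rule cong_eq_if_abs_le)
      show "[gmult G a b (y [^] p) = gmult G a b y] (mod int p)"
        using gmult_pow_prime_cong[OF p(1) p_order ab _ _ y]
          power_invariant_pow_prime[OF inv(1) p(1) p_order] power_invariant_pow_prime[OF inv(2) p(1) p_order]
        by blast
      show "\<bar>gmult G a b (y [^] p)\<bar> \<le> B" "\<bar>gmult G a b y\<bar> \<le> B" using B y by auto
      show "2 * B < int p" using p B[of \<one>] by linarith
    qed
  qed
qed

end

section \<open>Power sets and traces\<close>

context group
begin

lemma pow_set_subset: "X \<subseteq> carrier G \<Longrightarrow> pow_set G X m \<subseteq> carrier G"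
  unfolding pow_set_def by auto

lemma pow_set_1: "X \<subseteq> carrier G \<Longrightarrow> pow_set G X 1 = X"
  unfolding pow_set_def by (auto simp: image_iff subset_iff)

lemma pow_set_pow_set: "X \<subseteq> carrier G \<Longrightarrow> pow_set G (pow_set G X m) k = pow_set G X (m * k)"
  unfolding pow_set_def image_image by (intro image_cong) (auto simp: int_pow_pow)

lemma pow_set_cong_order:
  "X \<subseteq> carrier G \<Longrightarrow> [m = k] (mod int (order G)) \<Longrightarrow> pow_set G X m = pow_set G X k"
  unfolding pow_set_def by (intro image_cong) (auto intro: int_pow_cong_order)

end

context finite_group
begin

lemma mem_tr_iff: "y \<in> tr G X \<longleftrightarrow> (\<exists>m x. coprime m (int (order G)) \<and> x \<in> X \<and> y = x [^] m)"
  unfolding tr_def pow_set_def order_def by auto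

lemma subset_tr:
  assumes "X \<subseteq> carrier G"
  shows "X \<subseteq> tr G X"
proof -
  have "pow_set G X 1 \<subseteq> tr G X" unfolding tr_def by (intro UN_upper) simp
  then show ?thesis using pow_set_1[OF assms] by simp
qed

lemma tr_subset: "X \<subseteq> carrier G \<Longrightarrow> tr G X \<subseteq> carrier G"
  unfolding tr_def using pow_set_subset by blast

lemma tr_pow_set_subset:
  assumes "X \<subseteq> carrier G" "coprime m (int (order G))"
  shows "tr G (pow_set G X m) \<subseteq> tr G X"
proof
  fix y assume "y \<in> tr G (pow_set G X m)"
  then obtain k where k: "coprime k (int (order G))" "y \<in> pow_set G X (m * k)"
    using pow_set_pow_set[OF assms(1)] unfolding tr_def order_def by auto
  then show "y \<in> tr G X"
    using assms(2) unfolding tr_def order_def by (auto intro!: exI[of _ "m * k"])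
qed

lemma tr_pow_set:
  assumes X: "X \<subseteq> carrier G" and m: "coprime m (int (order G))"
  shows "tr G (pow_set G X m) = tr G X"
proof
  obtain m' where m': "[m * m' = 1] (mod int (order G))"
    using cong_solve_coprime_int m by blast
  then have "coprime m' (int (order G))"
    using cong_imp_coprime[OF cong_sym[OF m']] by simp
  moreover have "pow_set G (pow_set G X m) m' = X"
    using pow_set_cong_order[OF X m'] pow_set_pow_set[OF X] pow_set_1[OF X] by simp
  ultimately show "tr G X \<subseteq> tr G (pow_set G X m)"
    using tr_pow_set_subset[OF pow_set_subset[OF X], of m' m] by simp
qed (rule tr_pow_set_subset[OF X m])

lemma tr_one: "tr G {\<one>} = {\<one>}"
proof
  show "tr G {\<one>} \<subseteq> {\<one>}" by (auto simp: mem_tr_iff)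
qed (use subset_tr[of "{\<one>}"] in simp)

lemma inv_set_tr:
  assumes "X \<subseteq> carrier G"
  shows "inv_set G (tr G X) = tr G X"
proof -
  have inv_sub: "inv_set G (tr G X) \<subseteq> tr G X"
  proof
    fix y assume "y \<in> inv_set G (tr G X)"
    then obtain t where "t \<in> tr G X" "y = inv t" unfolding inv_set_def by blast
    then obtain m x where mx: "coprime m (int (order G))" "x \<in> X" "y = inv (x [^] m)"
      unfolding mem_tr_iff by blast
    then have "y = x [^] (- m)" using assms by (auto simp: int_pow_neg)
    moreover have "coprime (- m) (int (order G))" using mx(1) by simp
    ultimately show "y \<in> tr G X" unfolding mem_tr_iff using mx(2) by blast
  qed
  moreover have "inv_set G (inv_set G (tr G X)) = tr G X"
  proof -
    have "(\<lambda>x. inv (inv x)) ` tr G X = (\<lambda>x. x) ` tr G X"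
      using tr_subset[OF assms] by (intro image_cong) auto
    then show ?thesis unfolding inv_set_def image_image by simp
  qed
  ultimately show ?thesis
    unfolding inv_set_def by blast
qed

end

section \<open>Central S-rings\<close>

locale central_S_ring = finite_group G for G (structure) +
  fixes A :: "('a \<Rightarrow> int) set" and S :: "'a set set"
  assumes S_ring: "S_ring G A S" and central: "central G A"
begin

lemma partition_S: "is_partition G S"
  using S_ring unfolding S_ring_def by blast

lemma A_eq_zspan: "A = zspan S"
  using S_ring unfolding S_ring_def by blast

lemma one_in_A: "und {\<one>} \<in> A"
  using S_ring unfolding S_ring_def by blast

lemma A_closed:
  "a \<in> A \<Longrightarrow> b \<in> A \<Longrightarrow> (\<lambda>x. a x + b x) \<in> A \<and> (\<lambda>x. - a x) \<in> A \<and> gmult G a b \<in> A"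
  using S_ring unfolding S_ring_def by blast

lemma basic_set_subset: "X \<in> S \<Longrightarrow> X \<subseteq> carrier G"
  using partition_S unfolding is_partition_def by blast

lemma mem_A_iff: "a \<in> A \<longleftrightarrow> a \<in> ZG G \<and> (\<forall>Y\<in>S. \<forall>y1\<in>Y. \<forall>y2\<in>Y. a y1 = a y2)"
  unfolding A_eq_zspan by (rule zspan_iff[OF partition_S finite_carrier])

lemma A_const: "a \<in> A \<Longrightarrow> Y \<in> S \<Longrightarrow> y1 \<in> Y \<Longrightarrow> y2 \<in> Y \<Longrightarrow> a y1 = a y2"
  unfolding mem_A_iff by blast

lemma central_elem: "a \<in> A \<Longrightarrow> central G {a}"
  using central unfolding central_def by blast

lemma und_basic_set_in_A:
  assumes X: "X \<in> S"
  shows "und X \<in> A"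
proof -
  have "und X y1 = und X y2" if "Y \<in> S" "y1 \<in> Y" "y2 \<in> Y" for Y y1 y2
  proof -
    have "y1 \<in> X \<longleftrightarrow> y2 \<in> X"
      using is_partition_eq[OF partition_S X that(1)] that by blast
    then show ?thesis by (simp add: und_def)
  qed
  then show ?thesis
    unfolding mem_A_iff using und_ZG[OF basic_set_subset[OF X]] by blast
qed

lemma gpow_in_A: "a \<in> A \<Longrightarrow> gpow G a k \<in> A"
  by (induction k) (simp_all add: one_in_A A_closed)

lemma gpow_und_cong_und_pow_set:
  assumes q: "prime q" "\<not> q dvd order G" and X: "X \<in> S" and z: "z \<in> carrier G"
  shows "[gpow G (und X) q z = und (pow_set G X (int q)) z] (mod int q)"
proof -
  have cop: "coprime (int q) (int (order G))"
    using prime_imp_coprime[OF q] by simp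
  obtain y where y: "y \<in> carrier G" "y [^] int q = z"
    using coprime_int_pow_surj[OF cop z] by blast
  have "y \<in> X \<longleftrightarrow> z \<in> pow_set G X (int q)"
    using y coprime_int_pow_inj[OF cop] basic_set_subset[OF X] unfolding pow_set_def by blast
  then show ?thesis
    using classfun_gpow_prime_cong[OF q central_imp_classfun[OF central_elem[OF und_basic_set_in_A[OF X]]] y(1)]
      y(2) by (simp add: int_pow_int und_def)
qed

lemma basic_set_meets_pow_set:
  assumes q: "prime q" "\<not> q dvd order G" and X: "X \<in> S" and Y: "Y \<in> S"
    and meets: "Y \<inter> pow_set G X (int q) \<noteq> {}"
  shows "Y \<subseteq> pow_set G X (int q)"
proof
  fix y2 assume y2: "y2 \<in> Y"
  obtain y1 where y1: "y1 \<in> Y" "y1 \<in> pow_set G X (int q)" using meets by blast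
  have "gpow G (und X) q y1 = gpow G (und X) q y2"
    using gpow_in_A[OF und_basic_set_in_A[OF X]] Y y1(1) y2 unfolding mem_A_iff by blast
  moreover have "[gpow G (und X) q y1 = 1] (mod int q)"
    using gpow_und_cong_und_pow_set[OF q X, of y1] y1 basic_set_subset[OF Y] by (auto simp: und_def)
  ultimately have "[gpow G (und X) q y2 = 1] (mod int q)" by simp
  moreover have "[gpow G (und X) q y2 = und (pow_set G X (int q)) y2] (mod int q)"
    using gpow_und_cong_und_pow_set[OF q X] y2 basic_set_subset[OF Y] by blast
  ultimately have "[und (pow_set G X (int q)) y2 = 1] (mod int q)"
    using cong_sym cong_trans by blast
  moreover have "\<not> [0 = 1] (mod int q)"
    using prime_gt_1_nat[OF q(1)] by (simp add: cong_def)
  ultimately show "y2 \<in> pow_set G X (int q)"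
    by (cases "y2 \<in> pow_set G X (int q)") (simp_all add: und_def)
qed

lemma pow_set_basic_set_prime:
  assumes q: "prime q" "\<not> q dvd order G" and X: "X \<in> S"
  shows "pow_set G X (int q) \<in> S"
proof -
  have bij: "bij_betw (\<lambda>x. x [^] int q) (carrier G) (carrier G)"
    using coprime_int_pow_bij prime_imp_coprime[OF q] by simp
  show ?thesis
    unfolding pow_set_def
  proof (rule is_partition_image_block[OF partition_S finite_carrier])
    show "inj_on (\<lambda>x. x [^] int q) (carrier G)" using bij by (rule bij_betw_imp_inj_on)
    show "(\<lambda>x. x [^] int q) ` carrier G \<subseteq> carrier G" by auto
    show "Y \<subseteq> (\<lambda>x. x [^] int q) ` X'"
      if "X' \<in> S" "Y \<in> S" "Y \<inter> (\<lambda>x. x [^] int q) ` X' \<noteq> {}" for X' Y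
      using basic_set_meets_pow_set[OF q that(1,2)] that(3) unfolding pow_set_def by blast
  qed (rule X)
qed

lemma pow_set_basic_set:
  assumes m: "coprime m (int (order G))" and X: "X \<in> S"
  shows "pow_set G X m \<in> S"
proof -
  obtain k where k: "[int k = m] (mod int (order G))" "\<forall>X\<in>S. pow_set G X (int k) \<in> S"
  proof (rule coprime_exponent_reduction[OF order_gt_0 m, of "\<lambda>k. \<forall>X\<in>S. pow_set G X (int k) \<in> S" "order G"])
    show "\<forall>X\<in>S. pow_set G X (int 1) \<in> S"
      using pow_set_1 basic_set_subset by simp
    show "\<forall>X\<in>S. pow_set G X (int (p * k)) \<in> S"
      if p: "prime p" "order G < p" and k: "\<forall>X\<in>S. pow_set G X (int k) \<in> S" for p k
    proof
      fix X assume X: "X \<in> S"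
      have "\<not> p dvd order G" using p order_gt_0 by (auto dest: dvd_imp_le)
      then have "pow_set G (pow_set G X (int k)) (int p) \<in> S"
        using pow_set_basic_set_prime[OF p(1)] k X by blast
      then show "pow_set G X (int (p * k)) \<in> S"
        using pow_set_pow_set[OF basic_set_subset[OF X]] by (simp add: mult.commute)
    qed
  qed
  then have "pow_set G X (int k) \<in> S" using X by blast
  then show ?thesis
    using pow_set_cong_order[OF basic_set_subset[OF X] k(1)] by simp
qed

lemma tr_eq_if_meets:
  assumes X: "X \<in> S" and Y: "Y \<in> S" and z: "z \<in> tr G X" "z \<in> tr G Y"
  shows "tr G X = tr G Y"
proof -
  obtain m k where m: "coprime m (int (order G))" "z \<in> pow_set G X m"
    and k: "coprime k (int (order G))" "z \<in> pow_set G Y k"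
    using z unfolding tr_def order_def by blast
  have "pow_set G X m = pow_set G Y k"
    using is_partition_eq[OF partition_S pow_set_basic_set[OF m(1) X] pow_set_basic_set[OF k(1) Y] m(2) k(2)] .
  then show ?thesis
    using tr_pow_set[OF basic_set_subset[OF X] m(1)] tr_pow_set[OF basic_set_subset[OF Y] k(1)] by simp
qed

lemma partition_tr: "is_partition G (tr G ` S)"
  unfolding is_partition_def
proof (intro conjI ballI impI)
  fix T assume "T \<in> tr G ` S"
  then obtain X where X: "X \<in> S" "T = tr G X" by blast
  have "X \<noteq> {}" using partition_S X(1) unfolding is_partition_def by blast
  then show "T \<noteq> {}" using subset_tr[OF basic_set_subset[OF X(1)]] X(2) by blast
  show "T \<subseteq> carrier G" using tr_subset[OF basic_set_subset[OF X(1)]] X(2) by simp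
next
  show "\<Union> (tr G ` S) = carrier G"
  proof
    show "\<Union> (tr G ` S) \<subseteq> carrier G" using tr_subset[OF basic_set_subset] by blast
    show "carrier G \<subseteq> \<Union> (tr G ` S)"
    proof
      fix x assume "x \<in> carrier G"
      then obtain X where "X \<in> S" "x \<in> X" using is_partition_block[OF partition_S] by blast
      then show "x \<in> \<Union> (tr G ` S)" using subset_tr[OF basic_set_subset] by blast
    qed
  qed
next
  fix T T' assume "T \<in> tr G ` S" "T' \<in> tr G ` S" "T \<noteq> T'"
  then show "T \<inter> T' = {}" using tr_eq_if_meets by blast
qed

lemma zspan_tr_imp_power_invariant:
  assumes "a \<in> zspan (tr G ` S)"
  shows "a \<in> A \<and> power_invariant G a"
proof -
  from assms have "a \<in> ZG G \<and> (\<forall>T\<in>tr G ` S. \<forall>y1\<in>T. \<forall>y2\<in>T. a y1 = a y2)"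
    by (rule iffD1[OF zspan_iff[OF partition_tr finite_carrier]])
  then have ZG: "a \<in> ZG G" and blocks: "\<forall>T\<in>tr G ` S. \<forall>y1\<in>T. \<forall>y2\<in>T. a y1 = a y2"
    by (rule conjunct1, rule conjunct2)
  have const: "a y1 = a y2" if "X \<in> S" "y1 \<in> tr G X" "y2 \<in> tr G X" for X y1 y2
  proof -
    have T: "tr G X \<in> tr G ` S" using that(1) by (rule imageI)
    show ?thesis by (rule bspec[OF bspec[OF bspec[OF blocks T] that(2)] that(3)])
  qed
  have "a \<in> A"
    unfolding mem_A_iff
  proof (intro conjI ZG ballI)
    fix Y y1 y2 assume Y: "Y \<in> S" and y: "y1 \<in> Y" "y2 \<in> Y"
    show "a y1 = a y2" using y subset_tr[OF basic_set_subset[OF Y]] by (intro const[OF Y]) auto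
  qed
  moreover have "a (x [^] m) = a x" if x: "x \<in> carrier G" and m: "coprime m (int (order G))" for x m
  proof -
    obtain X where X: "X \<in> S" "x \<in> X" using is_partition_block[OF partition_S x] by blast
    have "x [^] m \<in> tr G X"
      unfolding mem_tr_iff using X(2) m by (intro exI[of _ m] exI[of _ x]) simp
    moreover have "x \<in> tr G X" using subset_tr[OF basic_set_subset[OF X(1)]] X(2) by (rule subsetD)
    ultimately show ?thesis by (rule const[OF X(1)])
  qed
  ultimately show "a \<in> A \<and> power_invariant G a" unfolding power_invariant_def by simp
qed

lemma power_invariant_imp_zspan_tr:
  assumes a: "a \<in> A \<and> power_invariant G a"
  shows "a \<in> zspan (tr G ` S)"
proof -
  have const: "a y = a x" if X: "X \<in> S" "x \<in> X" and y: "y \<in> tr G X" for X x y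
  proof -
    obtain m x' where x': "coprime m (int (order G))" "x' \<in> X" "y = x' [^] m"
      using y unfolding mem_tr_iff by blast
    then have "a y = a x'"
      using a basic_set_subset[OF X(1)] unfolding power_invariant_def by (simp add: subset_iff)
    also have "\<dots> = a x" by (rule A_const[OF conjunct1[OF a] X(1) x'(2) X(2)])
    finally show ?thesis .
  qed
  have "\<forall>T\<in>tr G ` S. \<forall>y1\<in>T. \<forall>y2\<in>T. a y1 = a y2"
  proof (intro ballI)
    fix T y1 y2 assume "T \<in> tr G ` S" "y1 \<in> T" "y2 \<in> T"
    then obtain X where X: "X \<in> S" "y1 \<in> tr G X" "y2 \<in> tr G X" by blast
    obtain x where x: "x \<in> X" using partition_S X(1) unfolding is_partition_def by blast
    show "a y1 = a y2" using const[OF X(1) x X(2)] const[OF X(1) x X(3)] by simp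
  qed
  moreover have "a \<in> ZG G" using conjunct1[OF a] unfolding mem_A_iff by blast
  ultimately show ?thesis
    by (intro iffD2[OF zspan_iff[OF partition_tr finite_carrier]] conjI)
qed

lemma zspan_tr_iff: "a \<in> zspan (tr G ` S) \<longleftrightarrow> a \<in> A \<and> power_invariant G a"
  using zspan_tr_imp_power_invariant power_invariant_imp_zspan_tr by blast

lemma phi_apply_pow:
  assumes a: "a \<in> A" and m: "coprime m (int (order G))" and x: "x \<in> carrier G"
  shows "phi G S m a (x [^] m) = a x"
proof -
  obtain X0 where X0: "X0 \<in> S" "x \<in> X0" using is_partition_block[OF partition_S x] by blast
  have "x [^] m \<in> pow_set G X m \<longleftrightarrow> X = X0" if X: "X \<in> S" for X
  proof
    assume "x [^] m \<in> pow_set G X m"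
    then obtain x' where x': "x' \<in> X" "x [^] m = x' [^] m" unfolding pow_set_def by blast
    then have "x' = x"
      using coprime_int_pow_inj[OF m, of x' x] x basic_set_subset[OF X] by auto
    then show "X = X0" using is_partition_eq[OF partition_S X X0(1)] x' X0 by blast
  qed (use X0 in \<open>auto simp: pow_set_def\<close>)
  then have "phi G S m a (x [^] m) = (\<Sum>X\<in>S. if X = X0 then a (SOME y. y \<in> X) else 0)"
    unfolding phi_def by (intro sum.cong) (simp_all add: und_def)
  also have "\<dots> = a (SOME y. y \<in> X0)"
    using is_partition_finite[OF partition_S finite_carrier] X0(1) by simp
  also have "\<dots> = a x"
    using A_const[OF a X0(1) _ X0(2)] someI[of "\<lambda>y. y \<in> X0", OF X0(2)] by blast
  finally show ?thesis .
qed

lemma phi_eq_self_iff: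
  assumes a: "a \<in> A" and m: "coprime m (int (order G))"
  shows "phi G S m a = a \<longleftrightarrow> (\<forall>x\<in>carrier G. a (x [^] m) = a x)"
proof
  assume "phi G S m a = a"
  then show "\<forall>x\<in>carrier G. a (x [^] m) = a x" using phi_apply_pow[OF a m] by metis
next
  assume inv: "\<forall>x\<in>carrier G. a (x [^] m) = a x"
  show "phi G S m a = a"
  proof
    fix g
    show "phi G S m a g = a g"
    proof (cases "g \<in> carrier G")
      case True
      then obtain y where y: "y \<in> carrier G" "y [^] m = g"
        by (rule coprime_int_pow_surj[OF m])
      then show ?thesis using phi_apply_pow[OF a m y(1)] inv by auto
    next
      case False
      have "g \<notin> pow_set G X m" if "X \<in> S" for X
        using False pow_set_subset[OF basic_set_subset[OF that]] by blast
      then have "phi G S m a g = 0" unfolding phi_def by (simp add: und_def)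
      then show ?thesis using False a mem_A_iff unfolding ZG_def by auto
    qed
  qed
qed

lemma zspan_tr_eq_phi_fixed:
  "zspan (tr G ` S) = {a \<in> A. \<forall>m. coprime m (int (order G)) \<longrightarrow> phi G S m a = a}"
  using zspan_tr_iff phi_eq_self_iff unfolding power_invariant_def by blast

lemma S_ring_tr: "S_ring G (zspan (tr G ` S)) (tr G ` S)"
proof -
  have closed: "(\<lambda>x. a x + b x) \<in> zspan (tr G ` S) \<and> (\<lambda>x. - a x) \<in> zspan (tr G ` S)
      \<and> gmult G a b \<in> zspan (tr G ` S)" if "a \<in> zspan (tr G ` S)" "b \<in> zspan (tr G ` S)" for a b
    using that A_closed central_elem power_invariant_gmult
    unfolding zspan_tr_iff power_invariant_def by auto
  have one: "und {\<one>} \<in> zspan (tr G ` S)"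
  proof -
    have "x [^] m = \<one> \<longleftrightarrow> x = \<one>" if "x \<in> carrier G" "coprime m (int (order G))" for x m
      using coprime_int_pow_inj[OF that(2) that(1), of \<one>] by auto
    then show ?thesis
      unfolding zspan_tr_iff power_invariant_def using one_in_A by (auto simp: und_def)
  qed
  have "zspan (tr G ` S) \<subseteq> ZG G"
    using zspan_tr_iff mem_A_iff by blast
  moreover have "{\<one>} \<in> tr G ` S"
    using tr_one S_ring unfolding S_ring_def by (metis image_eqI)
  moreover have "inv_set G T \<in> tr G ` S" if "T \<in> tr G ` S" for T
    using that inv_set_tr[OF basic_set_subset] by auto
  ultimately show ?thesis
    unfolding S_ring_def using closed one partition_tr by blast
qed

end

theorem mainTheorem7:
  fixes G :: "('a, 'b) monoid_scheme" and A :: "('a \<Rightarrow> int) set" and S :: "'a set set"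
  assumes "group G" and "finite (carrier G)"
    and "S_ring G A S" and "central G A"
  defines "P \<equiv> tr G ` S"
  shows "is_partition G P
     \<and> S_ring G (zspan P) P \<and> central G (zspan P) \<and> zspan P \<subseteq> A
     \<and> zspan P = {a \<in> A. \<forall>m :: int. coprime m (int (card (carrier G))) \<longrightarrow> phi G S m a = a}"
proof -
  interpret central_S_ring G A S
    using assms by (simp add: central_S_ring_def central_S_ring_axioms_def finite_group_def finite_group_axioms_def)
  have sub: "zspan P \<subseteq> A"
    unfolding P_def using zspan_tr_iff by blast
  moreover have "central G (zspan P)"
    using sub \<open>central G A\<close> unfolding central_def by blast
  ultimately show ?thesis
    using partition_tr S_ring_tr zspan_tr_eq_phi_fixed unfolding P_def order_def by blast
qed

end
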